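(* For $\beta\in\mathbb{N}$, $n\in\mathbb{N}$, $r\in\mathbb{Z}$ let $$T_{0,\beta}^{(2)}(n,r)=\frac{1}{\lfloor n/2^{\beta-1}\rfloor!}\sum_{k\equiv r\ (\mathrm{mod}\ 2^{\beta})}\binom nk(-1)^k.$$ Let $\alpha\in\mathbb{N}$, $n\in\mathbb{Z}^+$, $r\in\mathbb{Z}$ with $n\equiv r\equiv0\pmod{2^{\alpha}}$. Then $T_{0,\alpha+1}^{(2)}(n,r)\equiv1\pmod 2$ if and only if $n$ is a power of $2$.
   Context: The sum runs over all integers $k\equiv r\pmod{2^\beta}$ with $\binom nk=0$ unless $0\le k\le n$. For rationals $u,v$, $u\equiv v\pmod 2$ means $\operatorname{ord}_2(u-v)\ge1$. *)

theory Defs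
  imports Complex_Main "HOL-Number_Theory.Cong"
begin

text \<open>T^{(2)}_{0,beta}(n,r) = 1/floor(n/2^(beta-1))! * sum over k = r (mod 2^beta), 0 <= k <= n,
  of (n choose k) (-1)^k.  Only used with beta >= 1, where n div 2^(beta-1) is the floor.\<close>
definition T02 :: "nat \<Rightarrow> nat \<Rightarrow> int \<Rightarrow> rat" where
  "T02 beta n r =
     (\<Sum>k\<in>{k. k \<le> n \<and> [int k = r] (mod (2 ^ beta))}. of_nat (n choose k) * (-1) ^ k)
     / of_nat (fact (n div 2 ^ (beta - 1)))"

text \<open>u = v (mod 2) for rationals: ord_2(u - v) >= 1, i.e. u - v = 2a/b with b odd
  (this includes u = v).\<close>
definition rat_cong2 :: "rat \<Rightarrow> rat \<Rightarrow> bool" where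
  "rat_cong2 u v \<longleftrightarrow> (\<exists>a b :: int. odd b \<and> u - v = of_int (2 * a) / of_int b)"

end

theory Submission
  imports Defs "HOL-Computational_Algebra.Polynomial"
begin

text \<open>Write N = 2^alpha, n = N m and M = 2 N. The alternating sum in T02 is the sum of the
  coefficients of (1 - X)^n at exponents congruent to r mod M, a linear functional that kills
  multiples of X^M - 1; since N divides r, that residue is 0 or N.
  By the freshman's dream (1 - X)^N = u + 2 h with u = 1 - X^N, and u^2 = 2 u modulo X^M - 1.
  Expanding (u + 2 h)^m therefore gives 2^(m-1) (2 h^m + u ((1 + h)^m - h^m)), so the sum is
  2^(m-1) l, and l is odd when m is a power of 2, because then (1 + h)^m = 1 + h^m mod 2 and u
  contributes exactly one coefficient, +1 or -1.
  On the other side m! = 2^a q with q odd, a <= m - 1, and a = m - 1 exactly when m is a power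
  of 2. Hence T02 = 2^(m-1-a) l / q, which is 1 mod 2 iff m, equivalently n, is a power of 2.\<close>

lemma freshmans_dream_mod_2:
  fixes h :: "'a::comm_ring_1"
  shows "2 dvd ((1 + h) ^ 2 ^ t - (1 + h ^ 2 ^ t))"
proof (induction t)
  case 0
  then show ?case by simp
next
  case (Suc t)
  then obtain E where E: "(1 + h) ^ 2 ^ t = 1 + h ^ 2 ^ t + 2 * E"
    by (metis dvdE diff_add_cancel add.commute)
  have "(1 + h) ^ 2 ^ Suc t = ((1 + h) ^ 2 ^ t) ^ 2"
    by (simp add: power_mult [symmetric] mult.commute)
  also have "\<dots> = (1 + h ^ 2 ^ t + 2 * E) ^ 2"
    by (simp only: E)
  also have "\<dots> = 1 + h ^ 2 ^ t * h ^ 2 ^ t + 2 * (h ^ 2 ^ t + 2 * E + 2 * E * h ^ 2 ^ t + 2 * E * E)"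
    by (simp add: power2_eq_square algebra_simps)
  also have "h ^ 2 ^ t * h ^ 2 ^ t = h ^ 2 ^ Suc t"
    by (simp add: power_add [symmetric] mult_2)
  finally show ?case
    by (simp only: add_diff_cancel_left') (rule dvd_triv_left)
qed

lemma power_plus_double_quasi_idempotent:
  fixes u h z :: "'a::comm_ring_1"
  assumes idem: "u * u = 2 * u + z" and "m \<ge> 1"
  shows "z dvd ((u + 2 * h) ^ m - 2 ^ (m - 1) * (2 * h ^ m + u * ((1 + h) ^ m - h ^ m)))"
  using \<open>m \<ge> 1\<close>
proof (induction m rule: dec_induct)
  case base
  then show ?case by simp
next
  case (step m)
  define P where "P k = 2 ^ (k - 1) * (2 * h ^ k + u * ((1 + h) ^ k - h ^ k))" for k
  have pow: "(2::'a) ^ m = 2 * 2 ^ (m - 1)"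
    using \<open>m \<ge> 1\<close> by (cases m) auto
  have "(u + 2 * h) * P m = 2 ^ (m - 1) * (2 * u * h ^ m + (u * u) * ((1 + h) ^ m - h ^ m)
          + 4 * h * h ^ m + 2 * u * h * ((1 + h) ^ m - h ^ m))"
    by (simp add: P_def algebra_simps)
  also have "\<dots> = P (Suc m) + z * (2 ^ (m - 1) * ((1 + h) ^ m - h ^ m))"
    by (simp add: P_def idem pow algebra_simps)
  finally have "(u + 2 * h) ^ Suc m - P (Suc m)
      = (u + 2 * h) * ((u + 2 * h) ^ m - P m) + z * (2 ^ (m - 1) * ((1 + h) ^ m - h ^ m))"
    by (simp add: algebra_simps)
  then show ?case
    using step.IH by (simp add: P_def)
qed

lemma neg_power_add_power_mod_2:
  fixes x :: "'a::comm_ring_1"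
  shows "2 dvd ((- x) ^ k + x ^ k)"
  by (cases "even k") simp_all

lemma one_minus_X_power_two_pow_mod_2:
  "2 dvd ([:1, -1:] ^ 2 ^ t - (1 - monom 1 (2 ^ t)) :: 'a::comm_ring_1 poly)"
proof -
  define x :: "'a poly" where "x = monom 1 1"
  have "[:1, -1:] = 1 + - x"
    by (simp add: x_def monom_Suc one_pCons)
  moreover have "monom 1 (2 ^ t) = x ^ 2 ^ t"
    by (simp add: x_def monom_power)
  ultimately have "[:1, -1:] ^ 2 ^ t - (1 - monom 1 (2 ^ t) :: 'a poly)
      = ((1 + - x) ^ 2 ^ t - (1 + (- x) ^ 2 ^ t)) + ((- x) ^ 2 ^ t + x ^ 2 ^ t)"
    by simp
  then show ?thesis
    using freshmans_dream_mod_2 neg_power_add_power_mod_2 by (metis dvd_add)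
qed

definition coeff_sum_mod :: "nat \<Rightarrow> nat \<Rightarrow> 'a::comm_monoid_add poly \<Rightarrow> 'a" where
  "coeff_sum_mod M c p = (\<Sum>k\<le>degree p. if k mod M = c then coeff p k else 0)"

lemma coeff_sum_mod_eq_sum_lessThan:
  assumes "degree p < D"
  shows "coeff_sum_mod M c p = (\<Sum>k<D. if k mod M = c then coeff p k else 0)"
  unfolding coeff_sum_mod_def
  by (rule sum.mono_neutral_left) (use assms in \<open>auto simp: coeff_eq_0\<close>)

lemma coeff_sum_mod_diff:
  fixes p q :: "'a::ab_group_add poly"
  shows "coeff_sum_mod M c (p - q) = coeff_sum_mod M c p - coeff_sum_mod M c q"
proof -
  define D where "D = Suc (max (degree p) (degree q))"
  have "degree (p - q) < D" "degree p < D" "degree q < D"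
    using degree_diff_le_max [of p q] by (auto simp: D_def)
  then show ?thesis
    by (simp add: coeff_sum_mod_eq_sum_lessThan flip: sum_subtractf) (rule sum.cong; simp)
qed

lemma coeff_sum_mod_smult:
  "coeff_sum_mod M c (smult a p) = a * coeff_sum_mod M c p"
proof -
  have deg: "degree (smult a p) < Suc (degree p)" "degree p < Suc (degree p)"
    using degree_smult_le [of a p] by auto
  show ?thesis
    unfolding coeff_sum_mod_eq_sum_lessThan [OF deg(1)] coeff_sum_mod_eq_sum_lessThan [OF deg(2)]
      sum_distrib_left
    by (rule sum.cong) simp_all
qed

lemma coeff_sum_mod_monom:
  "coeff_sum_mod M c (monom a n) = (if n mod M = c then a else 0)"
proof -
  have deg: "degree (monom a n) < Suc n"
    by (simp add: degree_monom_le le_imp_less_Suc)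
  have "coeff_sum_mod M c (monom a n)
      = (\<Sum>k<Suc n. if k = n then (if n mod M = c then a else 0) else 0)"
    unfolding coeff_sum_mod_eq_sum_lessThan [OF deg] by (rule sum.cong) (auto simp: coeff_monom)
  then show ?thesis
    by simp
qed

lemma coeff_sum_mod_monom_mult:
  fixes p :: "'a::comm_semiring_1 poly"
  assumes "M > 0"
  shows "coeff_sum_mod M c (monom 1 M * p) = coeff_sum_mod M c p"
proof -
  define f where "f k = (if k mod M = c then coeff (monom 1 M * p) k else 0)" for k
  define D where "D = Suc (degree p)"
  have "degree (monom 1 M * p) < M + D"
    using degree_mult_le [of "monom 1 M" p] degree_monom_le [of "1::'a" M] by (simp add: D_def)
  then have "coeff_sum_mod M c (monom 1 M * p) = (\<Sum>k = 0..<M + D. f k)"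
    by (simp add: coeff_sum_mod_eq_sum_lessThan f_def atLeast0LessThan)
  also have "\<dots> = (\<Sum>k = 0..<M. f k) + (\<Sum>k = 0 + M..<D + M. f k)"
    by (simp add: sum.atLeastLessThan_concat add.commute)
  also have "(\<Sum>k = 0..<M. f k) = 0"
    by (simp add: f_def coeff_monom_mult)
  also have "(\<Sum>k = 0 + M..<D + M. f k) = (\<Sum>k = 0..<D. f (k + M))"
    by (rule sum.shift_bounds_nat_ivl)
  also have "\<dots> = (\<Sum>k<D. if k mod M = c then coeff p k else 0)"
    by (rule sum.cong) (auto simp: f_def coeff_monom_mult atLeast0LessThan)
  also have "\<dots> = coeff_sum_mod M c p"
    by (rule coeff_sum_mod_eq_sum_lessThan [symmetric]) (simp add: D_def)
  finally show ?thesis by simp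
qed

lemma coeff_sum_mod_multiple_eq_0:
  fixes p :: "'a::comm_ring_1 poly"
  assumes "M > 0" and "(monom 1 M - 1) dvd p"
  shows "coeff_sum_mod M c p = 0"
proof -
  obtain q where "p = monom 1 M * q - q"
    using assms(2) by (auto simp: left_diff_distrib)
  then show ?thesis
    by (simp add: coeff_sum_mod_diff coeff_sum_mod_monom_mult [OF assms(1)])
qed

lemma even_coeff_sum_mod:
  fixes p :: "int poly"
  assumes "2 dvd p"
  shows "even (coeff_sum_mod M c p)"
proof -
  obtain q where "p = smult 2 q"
    using assms by (auto simp: numeral_mult_conv_smult)
  then show ?thesis
    by (simp add: coeff_sum_mod_smult)
qed

lemma T02_eq_coeff_sum_mod:
  "T02 beta n r = of_int (coeff_sum_mod (2 ^ beta) (nat (r mod 2 ^ beta)) ([:1, -1:] ^ n))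
     / of_nat (fact (n div 2 ^ (beta - 1)))"
proof -
  define M :: nat where "M = 2 ^ beta"
  define c where "c = nat (r mod 2 ^ beta)"
  have cong_iff: "[int k = r] (mod 2 ^ beta) \<longleftrightarrow> k mod M = c" for k
  proof -
    have "[int k = r] (mod 2 ^ beta) \<longleftrightarrow> int (k mod M) = r mod int M"
      by (simp add: cong_def M_def zmod_int)
    also have "\<dots> \<longleftrightarrow> k mod M = c"
      by (auto simp: c_def M_def)
    finally show ?thesis .
  qed
  have deg: "degree ([:1, -1:] ^ n :: int poly) < Suc n"
    using degree_power_le [of "[:1, -1:] :: int poly" n] by simp
  have "coeff_sum_mod M c ([:1, -1:] ^ n :: int poly)
      = (\<Sum>k\<in>{..n}. if k mod M = c then of_nat (n choose k) * (-1) ^ k else 0)"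
    unfolding coeff_sum_mod_eq_sum_lessThan [OF deg] lessThan_Suc_atMost
    by (rule sum.cong) (simp_all add: coeff_linear_poly_power)
  also have "\<dots> = (\<Sum>k\<in>{k. k \<le> n \<and> [int k = r] (mod 2 ^ beta)}. of_nat (n choose k) * (-1) ^ k)"
    by (simp add: sum.inter_filter [symmetric] cong_iff atMost_def)
  finally show ?thesis
    by (simp add: T02_def M_def c_def)
qed

lemma mod_double_of_dvd:
  fixes d r :: int
  assumes "d dvd r"
  shows "r mod (2 * d) = 0 \<or> r mod (2 * d) = d"
proof -
  obtain j where "r = d * j"
    using assms by blast
  then have "r mod (2 * d) = d * (j mod 2)"
    by (simp add: mult.commute mod_mult_mult1)
  then show ?thesis
    by (cases "even j") (auto simp: mod_2_eq_odd)
qed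

lemma coeff_sum_mod_one_minus_X_power:
  fixes m c :: nat
  assumes c: "c = 0 \<or> c = 2 ^ alpha" and "m \<ge> 1"
  obtains l :: int
  where "coeff_sum_mod (2 ^ Suc alpha) c ([:1, -1:] ^ (2 ^ alpha * m)) = 2 ^ (m - 1) * l"
    and "(\<exists>t. m = 2 ^ t) \<Longrightarrow> odd l"
proof -
  define N :: nat where "N = 2 ^ alpha"
  define M :: nat where "M = 2 ^ Suc alpha"
  define L :: "int poly \<Rightarrow> int" where "L = coeff_sum_mod M c"
  define u :: "int poly" where "u = 1 - monom 1 N"
  obtain h where h: "[:1, -1:] ^ N = u + 2 * h"
    using one_minus_X_power_two_pow_mod_2 [of alpha] unfolding u_def N_def
    by (metis dvdE diff_add_cancel add.commute)
  have "monom 1 N * monom 1 N = (monom 1 M :: int poly)"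
    by (simp add: mult_monom M_def N_def mult_2)
  then have idem: "u * u = 2 * u + (monom 1 M - 1)"
    by (simp add: u_def algebra_simps)
  define B where "B = 2 * h ^ m + u * ((1 + h) ^ m - h ^ m)"
  have "(monom 1 M - 1) dvd ([:1, -1:] ^ (N * m) - smult (2 ^ (m - 1)) B)"
    using power_plus_double_quasi_idempotent [OF idem \<open>m \<ge> 1\<close>, of h]
    by (simp add: B_def h power_mult numeral_poly poly_const_pow)
  then have "L ([:1, -1:] ^ (N * m) - smult (2 ^ (m - 1)) B) = 0"
    unfolding L_def by (rule coeff_sum_mod_multiple_eq_0 [rotated]) (simp add: M_def)
  then have sum_eq: "L ([:1, -1:] ^ (N * m)) = 2 ^ (m - 1) * L B"
    by (simp add: L_def coeff_sum_mod_diff coeff_sum_mod_smult)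
  have "odd (L B)" if "m = 2 ^ t" for t
  proof -
    have "B - u = 2 * h ^ m + u * ((1 + h) ^ m - (1 + h ^ m))"
      by (simp add: B_def algebra_simps)
    then have "2 dvd (B - u)"
      using freshmans_dream_mod_2 [of h t] \<open>m = 2 ^ t\<close> by simp
    then have "even (L (B - u))"
      unfolding L_def by (rule even_coeff_sum_mod)
    then have "even (L B - L u)"
      by (simp add: L_def coeff_sum_mod_diff)
    moreover have "L u = (if c = 0 then 1 else 0) - (if c = N then 1 else 0)"
      by (simp add: L_def u_def coeff_sum_mod_diff coeff_sum_mod_monom flip: monom_eq_1)
         (simp add: M_def N_def)
    then have "odd (L u)"
      using c by (auto simp: N_def)
    ultimately show ?thesis
      by simp
  qed
  then show thesis
    using that sum_eq by (auto simp: L_def M_def N_def)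
qed

lemma power_of_two_mult_iff:
  "(\<exists>t. 2 ^ s * m = (2::nat) ^ t) \<longleftrightarrow> (\<exists>t. m = (2::nat) ^ t)"
proof
  assume "\<exists>t. 2 ^ s * m = (2::nat) ^ t"
  then obtain t where "m dvd 2 ^ t"
    by (metis dvd_triv_right)
  then show "\<exists>t. m = (2::nat) ^ t"
    by (auto simp: divides_primepow_nat)
next
  assume "\<exists>t. m = (2::nat) ^ t"
  then show "\<exists>t. 2 ^ s * m = (2::nat) ^ t"
    by (auto simp flip: power_add)
qed

lemma fact_double_eq_odd_prod:
  "fact (2 * k) = 2 ^ k * fact k * (\<Prod>i<k. 2 * i + 1 :: nat)"
  by (induction k) (simp_all add: fact_Suc algebra_simps)

lemma fact_two_adic:
  "m \<ge> 1 \<Longrightarrow>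
    \<exists>a q. odd q \<and> fact m = (2::nat) ^ a * q \<and> a < m \<and> (a + 1 = m \<longleftrightarrow> (\<exists>t. m = 2 ^ t))"
proof (induction m rule: less_induct)
  case (less m)
  show ?case
  proof (cases "m = 1")
    case True
    then show ?thesis
      by (intro exI [of _ 0] exI [of _ 1]) (auto intro: exI [of _ 0])
  next
    case False
    define k where "k = m div 2"
    have "1 \<le> k" "k < m"
      using less.prems False by (auto simp: k_def)
    then obtain a q where "odd q" "fact k = (2::nat) ^ a * q" "a < k"
      and pow_k: "a + 1 = k \<longleftrightarrow> (\<exists>t. k = 2 ^ t)"
      using less.IH by blast
    define q' where "q' = q * (\<Prod>i<k. 2 * i + 1)"
    have "odd q'"
      using \<open>odd q\<close> by (simp add: q'_def even_prod_iff)
    have fact_even: "fact (2 * k) = (2::nat) ^ (k + a) * q'"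
      unfolding fact_double_eq_odd_prod \<open>fact k = 2 ^ a * q\<close> q'_def
      by (simp add: power_add algebra_simps)
    show ?thesis
    proof (cases "even m")
      case True
      then have "m = 2 * k"
        by (simp add: k_def)
      moreover have "k + a + 1 = 2 * k \<longleftrightarrow> (\<exists>t. 2 * k = 2 ^ t)"
        using pow_k power_of_two_mult_iff [of 1 k] by auto
      ultimately show ?thesis
        using \<open>odd q'\<close> fact_even \<open>a < k\<close> by (intro exI [of _ "k + a"] exI [of _ q']) auto
    next
      case False
      then have m: "m = Suc (2 * k)"
        by (simp add: k_def)
      have "\<not> (\<exists>t. m = 2 ^ t)"
      proof
        assume "\<exists>t. m = 2 ^ t"
        then obtain t where "m = 2 ^ t" ..
        with False \<open>m \<noteq> 1\<close> show False
          by (cases t) auto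
      qed
      moreover have "fact m = (2::nat) ^ (k + a) * (m * q')"
        using fact_even by (simp add: m fact_Suc algebra_simps)
      ultimately show ?thesis
        using \<open>odd q'\<close> False \<open>a < k\<close> m by (intro exI [of _ "k + a"] exI [of _ "m * q'"]) auto
    qed
  qed
qed

lemma rat_cong2_frac_one_iff:
  fixes p q :: int
  assumes "odd q"
  shows "rat_cong2 (of_int p / of_int q) 1 \<longleftrightarrow> odd p"
proof
  have "q \<noteq> 0"
    using assms by auto
  assume "rat_cong2 (of_int p / of_int q) 1"
  then obtain a b :: int
    where "odd b" and eq: "of_int p / of_int q - 1 = (of_int (2 * a) / of_int b :: rat)"
    unfolding rat_cong2_def by blast
  then have "b \<noteq> 0"
    by auto
  with eq \<open>q \<noteq> 0\<close> have "of_int (b * (p - q)) = (of_int (2 * a * q) :: rat)"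
    by (simp add: field_simps)
  then have "even (b * (p - q))"
    by (simp only: of_int_eq_iff) simp
  with \<open>odd b\<close> assms show "odd p"
    by simp
next
  have "q \<noteq> 0"
    using assms by auto
  assume "odd p"
  with assms have "even (p - q)"
    by simp
  then obtain a where "p - q = 2 * a" ..
  with \<open>q \<noteq> 0\<close> have "of_int p / of_int q - 1 = (of_int (2 * a) / of_int q :: rat)"
    by (simp add: field_simps flip: of_int_diff)
  with assms show "rat_cong2 (of_int p / of_int q) 1"
    unfolding rat_cong2_def by blast
qed

lemma T02_power_of_two_multiple:
  fixes m :: nat and r :: int
  assumes "(2::int) ^ alpha dvd r" and "m \<ge> 1"
  obtains l :: int
  where "T02 (Suc alpha) (2 ^ alpha * m) r = of_int (2 ^ (m - 1) * l) / of_nat (fact m)"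
    and "(\<exists>t. m = 2 ^ t) \<Longrightarrow> odd l"
proof -
  define c where "c = nat (r mod 2 ^ Suc alpha)"
  have "r mod 2 ^ Suc alpha = 0 \<or> r mod 2 ^ Suc alpha = 2 ^ alpha"
    using mod_double_of_dvd [OF assms(1)] by simp
  then have "c = 0 \<or> c = 2 ^ alpha"
    by (auto simp: c_def nat_power_eq)
  then obtain l :: int
    where "coeff_sum_mod (2 ^ Suc alpha) c ([:1, -1:] ^ (2 ^ alpha * m)) = 2 ^ (m - 1) * l"
    and "(\<exists>t. m = 2 ^ t) \<Longrightarrow> odd l"
    using coeff_sum_mod_one_minus_X_power [OF _ \<open>m \<ge> 1\<close>] by blast
  moreover have "T02 (Suc alpha) (2 ^ alpha * m) r
      = of_int (coeff_sum_mod (2 ^ Suc alpha) c ([:1, -1:] ^ (2 ^ alpha * m))) / of_nat (fact m)"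
    by (simp add: T02_eq_coeff_sum_mod c_def)
  ultimately show thesis
    using that by simp
qed

theorem lemma4p2:
  fixes alpha n :: nat and r :: int
  assumes "n > 0" and "2 ^ alpha dvd n" and "(2::int) ^ alpha dvd r"
  shows "rat_cong2 (T02 (Suc alpha) n r) 1 \<longleftrightarrow> (\<exists>m::nat. n = 2 ^ m)"
proof -
  obtain m where n: "n = 2 ^ alpha * m"
    using assms(2) ..
  with assms(1) have "m \<ge> 1"
    by (simp add: Suc_le_eq)
  obtain l where T: "T02 (Suc alpha) n r = of_int (2 ^ (m - 1) * l) / of_nat (fact m)"
    and odd_l: "(\<exists>t. m = 2 ^ t) \<Longrightarrow> odd l"
    using T02_power_of_two_multiple [OF assms(3) \<open>m \<ge> 1\<close>] unfolding n by blast
  obtain a q where "odd q" "fact m = (2::nat) ^ a * q" "a < m"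
    and a: "a + 1 = m \<longleftrightarrow> (\<exists>t. m = 2 ^ t)"
    using fact_two_adic [OF \<open>m \<ge> 1\<close>] by blast
  have "(2::rat) ^ (m - 1) = 2 ^ a * 2 ^ (m - 1 - a)"
    using \<open>a < m\<close> by (simp flip: power_add)
  with T have "T02 (Suc alpha) n r = of_int (2 ^ (m - 1 - a) * l) / of_int (int q)"
    by (simp add: \<open>fact m = 2 ^ a * q\<close>)
  then have "rat_cong2 (T02 (Suc alpha) n r) 1 \<longleftrightarrow> odd (2 ^ (m - 1 - a) * l)"
    using rat_cong2_frac_one_iff [of "int q" "2 ^ (m - 1 - a) * l"] \<open>odd q\<close> by simp
  also have "\<dots> \<longleftrightarrow> (\<exists>t. m = 2 ^ t)"
    using a odd_l \<open>a < m\<close> by auto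
  also have "\<dots> \<longleftrightarrow> (\<exists>t. n = 2 ^ t)"
    using power_of_two_mult_iff n by simp
  finally show ?thesis .
qed

end
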